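(* In the twisted Yangian $Y^+(\mathfrak{gl}_{2n+1})$, with $\hat n=n+1$, for every $1\le k\le n$ one has, as an identity of formal series in $u^{-1},v^{-1}$ (rational coefficients expanded accordingly), $$s_{\hat n\hat n}(v)\,s_{k\hat n}(u)=f^-(v,u)\,f^+(v,\tilde u)\,s_{k\hat n}(u)\,s_{\hat n\hat n}(v)-\Big(\frac{p(v)}{u-v}\,s_{k\hat n}(v)+\frac{p(\tilde v)}{u-\tilde v}\,s_{k\hat n}(\tilde v)\Big)s_{\hat n\hat n}(u),$$ where $p(v):=1+\frac{1}{v-\tilde v}$.
   Context: Fix $n\ge1$, $N=2n+1$, $\hat n=n+1$ (orthogonal case, upper signs). Fix $\rho\in\mathbb C$ and write $\tilde u:=-u-\rho$, $\tilde v:=-v-\rho$. Let $f^\pm(u,v):=\frac{u-v\pm1}{u-v}$. For $k\in\mathbb N$ let $E^{(k)}_{ij}$ be matrix units of $\mathrm{End}(\mathbb C^k)$, $P^{(k,k)}=\sum_{i,j}E^{(k)}_{ij}\otimes E^{(k)}_{ji}$, $R^{(k,k)}(u)=I-u^{-1}P^{(k,k)}$. $Y^+(\mathfrak{gl}_{2n+1})$ is generated by $s_{ij}[r]$, $1\le i,j\le 2n+1$, $r\ge1$, with $s_{ij}(u)=\delta_{ij}+\sum_{r\ge1}s_{ij}[r]u^{-r}$. Let $\alpha(i)=i$ for $i\le n+1$ and $\alpha(i)=i-1$ for $i>n+1$, and $S(u):=\sum_{i,j=1}^{2n+2}E^{(2n+2)}_{ij}\otimes s_{\alpha(i)\alpha(j)}(u)$.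 Let $\hat\omega(E^{(2n+2)}_{ij})=E^{(2n+2)}_{\bar j\bar i}$ with $\bar i=2n+3-i$, $\hat S=\hat\omega(S)$, $\hat R=(\mathrm{id}\otimes\hat\omega)(R^{(2n+2,2n+2)})$. Defining relations: $R_{12}(u-v)S_1(u)\hat R_{12}(\tilde v-u)S_2(v)=S_2(v)\hat R_{12}(\tilde v-u)S_1(u)R_{12}(u-v)$ with $R=R^{(2n+2,2n+2)}$, and $\hat S(\tilde u)=S(u)+\frac{S(u)-S(\tilde u)}{u-\tilde u}$. *)

theory Defs
  imports Complex_Main "HOL-Computational_Algebra.Formal_Power_Series"
begin

(* A (unital, associative) complex algebra A is encoded as a ring_1 type 'a together
   with a unital ring homomorphism phi : complex -> 'a whose image is central. *)
definition calg_map :: "(complex \<Rightarrow> 'a::ring_1) \<Rightarrow> bool" where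
  "calg_map \<phi> \<longleftrightarrow> \<phi> 1 = 1 \<and> (\<forall>a b. \<phi> (a + b) = \<phi> a + \<phi> b)
     \<and> (\<forall>a b. \<phi> (a * b) = \<phi> a * \<phi> b) \<and> (\<forall>c x. \<phi> c * x = x * \<phi> c)"

(* One-variable series: s_ij(w) = delta_ij + sum_{r>=1} s_ij[r] w^{-r},
   encoded as a power series in z = w^{-1}. *)
definition ser :: "(nat \<Rightarrow> nat \<Rightarrow> nat \<Rightarrow> 'a::ring_1) \<Rightarrow> nat \<Rightarrow> nat \<Rightarrow> 'a fps" where
  "ser s i j = Abs_fps (\<lambda>r. if r = 0 then (if i = j then 1 else 0) else s i j r)"

(* (-w-rho)^{-1} expanded in z = w^{-1}:  -z/(1+rho z) = - sum_{m>=1} (-rho)^{m-1} z^m *)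
definition tilde_var :: "(complex \<Rightarrow> 'a::ring_1) \<Rightarrow> complex \<Rightarrow> 'a fps" where
  "tilde_var \<phi> \<rho> = Abs_fps (\<lambda>m. if m = 0 then 0 else - \<phi> ((-\<rho>) ^ (m - 1)))"

(* g(w) |-> g(-w-rho), re-expanded as a series in z = w^{-1} *)
definition tld :: "(complex \<Rightarrow> 'a::ring_1) \<Rightarrow> complex \<Rightarrow> 'a fps \<Rightarrow> 'a fps" where
  "tld \<phi> \<rho> g = fps_compose g (tilde_var \<phi> \<rho>)"

(* Two-variable series: 'a fps fps, outer variable x = u^{-1}, inner variable y = v^{-1}. *)
definition inU :: "'a::ring_1 fps \<Rightarrow> 'a fps fps" where
  "inU g = Abs_fps (\<lambda>r. fps_const (fps_nth g r))"

definition inV :: "'a::ring_1 fps \<Rightarrow> 'a fps fps" where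
  "inV g = fps_const g"

definition xU :: "'a::ring_1 fps fps" where "xU = fps_X"
definition yV :: "'a::ring_1 fps fps" where "yV = fps_const fps_X"

definition sc :: "(complex \<Rightarrow> 'a::ring_1) \<Rightarrow> complex \<Rightarrow> 'a fps fps" where
  "sc \<phi> c = fps_const (fps_const (\<phi> c))"

(* alpha : {1..2n+2} -> {1..2n+1}, and bar i = 2n+3-i *)
definition alpha :: "nat \<Rightarrow> nat \<Rightarrow> nat" where
  "alpha n i = (if i \<le> n + 1 then i else i - 1)"

definition bar :: "nat \<Rightarrow> nat \<Rightarrow> nat" where
  "bar n i = 2 * n + 3 - i"

(* Operators in End(C^{2n+2}) (x) End(C^{2n+2}) (x) (series): entries indexed by
   a = (i,k), b = (j,l), meaning the coefficient of E_ij (x) E_kl. *)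
definition idx :: "nat \<Rightarrow> (nat \<times> nat) set" where
  "idx n = {1..2*n+2} \<times> {1..2*n+2}"

type_synonym 'a op2 = "nat \<times> nat \<Rightarrow> nat \<times> nat \<Rightarrow> 'a fps fps"

definition mmul :: "nat \<Rightarrow> 'a::ring_1 op2 \<Rightarrow> 'a op2 \<Rightarrow> 'a op2" where
  "mmul n M M' a b = (\<Sum>c\<in>idx n. M a c * M' c b)"

definition Iop :: "'a::ring_1 op2" where
  "Iop a b = (if a = b then 1 else 0)"

definition Pop :: "'a::ring_1 op2" where
  "Pop a b = (if fst a = snd b \<and> snd a = fst b then 1 else 0)"

(* hat P = (id (x) hat omega)(P) = sum E_ij (x) E_{bar i, bar j} *)
definition Qop :: "nat \<Rightarrow> 'a::ring_1 op2" where
  "Qop n a b = (if snd a = bar n (fst a) \<and> snd b = bar n (fst b) then 1 else 0)"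

definition S1 :: "nat \<Rightarrow> (nat \<Rightarrow> nat \<Rightarrow> nat \<Rightarrow> 'a::ring_1) \<Rightarrow> 'a op2" where
  "S1 n s a b = (if snd a = snd b then inU (ser s (alpha n (fst a)) (alpha n (fst b))) else 0)"

definition S2 :: "nat \<Rightarrow> (nat \<Rightarrow> nat \<Rightarrow> nat \<Rightarrow> 'a::ring_1) \<Rightarrow> 'a op2" where
  "S2 n s a b = (if fst a = fst b then inV (ser s (alpha n (snd a)) (alpha n (snd b))) else 0)"

(* (u-v) R(u-v) * xy = (y - x) I - xy P *)
definition Rc :: "'a::ring_1 op2" where
  "Rc a b = (yV - xU) * Iop a b - xU * yV * Pop a b"

(* (tilde v - u) hatR(tilde v - u) * xy = -(x + y + rho x y) I - xy hatP *)
definition Rhc :: "nat \<Rightarrow> (complex \<Rightarrow> 'a::ring_1) \<Rightarrow> complex \<Rightarrow> 'a op2" where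
  "Rhc n \<phi> \<rho> a b = - (xU + yV + sc \<phi> \<rho> * xU * yV) * Iop a b - xU * yV * Qop n a b"

(* Reflection relation  R(u-v) S1(u) hatR(tilde v-u) S2(v) = S2(v) hatR(tilde v-u) S1(u) R(u-v),
   with both scalar denominators (u-v) and (tilde v - u) cleared (and multiplied by (xy)^2). *)
definition refl_rel :: "nat \<Rightarrow> (complex \<Rightarrow> 'a::ring_1) \<Rightarrow> complex \<Rightarrow> (nat \<Rightarrow> nat \<Rightarrow> nat \<Rightarrow> 'a) \<Rightarrow> bool" where
  "refl_rel n \<phi> \<rho> s \<longleftrightarrow> (\<forall>a\<in>idx n. \<forall>b\<in>idx n.
     mmul n (mmul n (mmul n Rc (S1 n s)) (Rhc n \<phi> \<rho>)) (S2 n s) a b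
   = mmul n (mmul n (mmul n (S2 n s) (Rhc n \<phi> \<rho>)) (S1 n s)) Rc a b)"

(* Symmetry relation  hatS(tilde u) = S(u) + (S(u) - S(tilde u))/(u - tilde u), entrywise,
   where hatS_{ab} = s_{alpha(bar b), alpha(bar a)}; multiplied by (u - tilde u) z = 2 + rho z. *)
definition symm_rel :: "nat \<Rightarrow> (complex \<Rightarrow> 'a::ring_1) \<Rightarrow> complex \<Rightarrow> (nat \<Rightarrow> nat \<Rightarrow> nat \<Rightarrow> 'a) \<Rightarrow> bool" where
  "symm_rel n \<phi> \<rho> s \<longleftrightarrow> (\<forall>a\<in>{1..2*n+2}. \<forall>b\<in>{1..2*n+2}.
     (2 + fps_const (\<phi> \<rho>) * fps_X) * tld \<phi> \<rho> (ser s (alpha n (bar n b)) (alpha n (bar n a)))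
   = (2 + fps_const (\<phi> \<rho>) * fps_X) * ser s (alpha n a) (alpha n b)
     + fps_X * (ser s (alpha n a) (alpha n b) - tld \<phi> \<rho> (ser s (alpha n a) (alpha n b))))"

(* s : generators s_ij[r] (1 <= i,j <= 2n+1, r >= 1) of a complex algebra satisfying the
   defining relations of Y^+(gl_{2n+1}) *)
definition twisted_yangian_gens ::
  "nat \<Rightarrow> (complex \<Rightarrow> 'a::ring_1) \<Rightarrow> complex \<Rightarrow> (nat \<Rightarrow> nat \<Rightarrow> nat \<Rightarrow> 'a) \<Rightarrow> bool" where
  "twisted_yangian_gens n \<phi> \<rho> s \<longleftrightarrow> calg_map \<phi> \<and> refl_rel n \<phi> \<rho> s \<and> symm_rel n \<phi> \<rho> s"

end

theory Submission
  imports Defs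
begin

text \<open>
  Write n' = n + 1, k' = 2n + 2 - k and w~ = -w - \<rho>. Both sides of the identity are
  combinations of eight quadratic monomials in s_kn', s_n'n', s_n'k' and the shifted series
  s_kn'(v~), s_n'k'(v~), with coefficients that are scalar series in u^-1, v^-1. The entries
  (kn', n'n') and (n'k, n'n') of the reflection relation and two instances of the symmetry relation
  give four linear relations among these monomials. Eliminating the monomials containing s_n'k'
  requires cancelling the factors u - v - 1 and 2v + \<rho> + 1, which are not zero divisors on
  power series. The generators do not commute but the scalars are central, so the linear algebra
  is done on coefficient vectors over the commutative ring \<complex>[[x,y]], mapped into the algebra by a
  central ring homomorphism.
\<close>

definition central_hom :: "('b::ring_1 \<Rightarrow> 'c::ring_1) \<Rightarrow> bool" where
  "central_hom h \<longleftrightarrow> h 1 = 1 \<and> (\<forall>a b. h (a + b) = h a + h b)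
     \<and> (\<forall>a b. h (a * b) = h a * h b) \<and> (\<forall>c x. h c * x = x * h c)"

lemma central_homD:
  assumes "central_hom h"
  shows central_hom_1: "h 1 = 1" and central_hom_add: "h (a + b) = h a + h b"
    and central_hom_mult: "h (a * b) = h a * h b" and central_hom_commute: "h c * x = x * h c"
  using assms unfolding central_hom_def by blast+

lemma calg_map_iff_central_hom: "calg_map \<phi> \<longleftrightarrow> central_hom \<phi>"
  unfolding calg_map_def central_hom_def ..

lemma central_hom_0: "central_hom h \<Longrightarrow> h 0 = 0"
  using central_hom_add[of h 0 0] by simp

lemma central_hom_minus: "central_hom h \<Longrightarrow> h (- a) = - h a"
  using central_hom_add[of h a "- a"] central_hom_0[of h] by (metis neg_eq_iff_add_eq_0)

lemma central_hom_diff: "central_hom h \<Longrightarrow> h (a - b) = h a - h b"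
  using central_hom_add[of h a "- b"] central_hom_minus[of h b] by simp

lemma central_hom_sum: "central_hom h \<Longrightarrow> h (sum g A) = (\<Sum>x\<in>A. h (g x))"
  using sum_comp_morphism[of h g A] central_hom_0[of h] central_hom_add[of h]
  by (simp add: o_def)

lemma central_hom_of_nat: "central_hom h \<Longrightarrow> h (of_nat m) = of_nat m"
  by (induction m) (simp_all add: central_hom_0 central_hom_1 central_hom_add)

lemma central_hom_numeral: "central_hom h \<Longrightarrow> h (numeral w) = numeral w"
  using central_hom_of_nat[of h "numeral w"] by simp

definition fps_map :: "('b::ring_1 \<Rightarrow> 'c::ring_1) \<Rightarrow> 'b fps \<Rightarrow> 'c fps" where
  "fps_map h f = Abs_fps (\<lambda>i. h (fps_nth f i))"

lemma fps_map_nth [simp]: "fps_nth (fps_map h f) i = h (fps_nth f i)"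
  by (simp add: fps_map_def)

lemma fps_map_fps_const: "central_hom h \<Longrightarrow> fps_map h (fps_const c) = fps_const (h c)"
  by (rule fps_ext) (simp add: central_hom_0)

lemma fps_map_fps_X: "central_hom h \<Longrightarrow> fps_map h fps_X = fps_X"
  by (rule fps_ext) (simp add: central_hom_0 central_hom_1 fps_X_def)

lemma central_hom_fps_map:
  assumes h: "central_hom h"
  shows "central_hom (fps_map h)"
  unfolding central_hom_def
proof (intro conjI allI)
  show "fps_map h 1 = 1"
    by (rule fps_ext) (simp add: central_hom_0[OF h] central_hom_1[OF h])
  fix a b
  show "fps_map h (a + b) = fps_map h a + fps_map h b"
    by (rule fps_ext) (simp add: central_hom_add[OF h])
  show "fps_map h (a * b) = fps_map h a * fps_map h b"
    by (rule fps_ext) (simp add: fps_mult_nth central_hom_sum[OF h] central_hom_mult[OF h])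
next
  fix c :: "'a fps" and x :: "'b fps"
  show "fps_map h c * x = x * fps_map h c"
  proof (rule fps_ext)
    fix m
    have "fps_nth (fps_map h c * x) m = (\<Sum>i=0..m. fps_nth x (m - i) * h (fps_nth c i))"
      by (simp add: fps_mult_nth central_hom_commute[OF h])
    also have "\<dots> = (\<Sum>i=0..m. fps_nth x i * h (fps_nth c (m - i)))"
      by (rule sum.reindex_bij_witness[where i="\<lambda>i. m - i" and j="\<lambda>i. m - i"]) auto
    also have "\<dots> = fps_nth (x * fps_map h c) m"
      by (simp add: fps_mult_nth)
    finally show "fps_nth (fps_map h c * x) m = fps_nth (x * fps_map h c) m" .
  qed
qed

abbreviation scalar :: "(complex \<Rightarrow> 'a::ring_1) \<Rightarrow> complex fps fps \<Rightarrow> 'a fps fps" where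
  "scalar \<phi> \<equiv> fps_map (fps_map \<phi>)"

definition xC :: "complex fps fps" where "xC = fps_X"
definition yC :: "complex fps fps" where "yC = fps_const fps_X"
definition cC :: "complex \<Rightarrow> complex fps fps" where "cC c = fps_const (fps_const c)"

lemma cC_1: "cC 1 = 1"
  and cC_add: "cC (a + b) = cC a + cC b"
  and cC_diff: "cC (a - b) = cC a - cC b"
  by (simp_all add: cC_def)

lemma central_hom_scalar: "calg_map \<phi> \<Longrightarrow> central_hom (scalar \<phi>)"
  by (intro central_hom_fps_map) (simp add: calg_map_iff_central_hom)

lemma scalar_atoms:
  fixes \<phi> :: "complex \<Rightarrow> 'a::ring_1"
  assumes "calg_map \<phi>"
  shows "xU = scalar \<phi> xC" "yV = scalar \<phi> yC" "sc \<phi> c = scalar \<phi> (cC c)"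
  using assms by (simp_all add: calg_map_iff_central_hom xU_def yV_def sc_def xC_def yC_def cC_def
      fps_map_fps_const fps_map_fps_X central_hom_fps_map)

lemma scalar_fold:
  fixes \<phi> :: "complex \<Rightarrow> 'a::ring_1"
  assumes "calg_map \<phi>"
  shows "scalar \<phi> a * scalar \<phi> b = scalar \<phi> (a * b)"
    and "scalar \<phi> a + scalar \<phi> b = scalar \<phi> (a + b)"
    and "scalar \<phi> a - scalar \<phi> b = scalar \<phi> (a - b)"
    and "- scalar \<phi> a = scalar \<phi> (- a)"
    and "scalar \<phi> a * (scalar \<phi> b * r) = scalar \<phi> (a * b) * r"
    and "(numeral w :: 'a fps fps) = scalar \<phi> (numeral w)"
    and "(1 :: 'a fps fps) = scalar \<phi> 1"
  using central_hom_scalar[OF assms]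
  by (simp_all add: central_hom_mult central_hom_add central_hom_diff central_hom_minus
      central_hom_numeral central_hom_1 flip: mult.assoc)

lemma scalar_commute:
  fixes \<phi> :: "complex \<Rightarrow> 'a::ring_1"
  assumes "calg_map \<phi>"
  shows "r * scalar \<phi> a = scalar \<phi> a * r"
  using central_hom_commute[OF central_hom_scalar[OF assms]] by simp

lemma inV_simps:
  "inV (a * b) = inV a * inV b"
  "inV (a + b) = inV a + inV b"
  "inV (a - b) = inV a - inV b"
  "inV 2 = 2"
  "inV (fps_const (\<phi> c)) = sc \<phi> c"
  "inV fps_X = yV"
  by (simp_all add: inV_def sc_def yV_def fps_numeral_fps_const)

section \<open>Cancellation of non-zero-divisors\<close>

lemma fps_mult_eq_0_cancel_left:
  fixes f g :: "'a::semiring_0 fps"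
  assumes cancel: "\<And>a. fps_nth f 0 * a = 0 \<Longrightarrow> a = 0" and "f * g = 0"
  shows "g = 0"
proof (rule fps_ext)
  fix m
  show "fps_nth g m = fps_nth 0 m"
  proof (induction m rule: less_induct)
    case (less m)
    have "(\<Sum>j=Suc 0..m. fps_nth f j * fps_nth g (m - j)) = 0"
      using less.IH by (intro sum.neutral) auto
    then have "fps_nth f 0 * fps_nth g m = fps_nth (f * g) m"
      by (simp add: fps_mult_nth sum.atLeast_Suc_atMost)
    with \<open>f * g = 0\<close> show ?case
      using cancel by simp
  qed
qed

text \<open>\<open>yV - xU - xU * yV\<close> is (u - v - 1)/(uv); its constant term in u^-1 is v^-1, which is
  cancellable.\<close>

lemma uv_factor_cancel:
  fixes F :: "'a::ring_1 fps fps"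
  assumes "(yV - xU - xU * yV) * F = 0"
  shows "F = 0"
  using assms
proof (rule fps_mult_eq_0_cancel_left[rotated])
  fix a :: "'a fps"
  assume "fps_nth (yV - xU - xU * yV) 0 * a = 0"
  then have "fps_X * a = 0" by (simp add: xU_def yV_def)
  then show "a = 0" using fps_mult_fps_X_nonzero by blast
qed

lemma two_plus_cancel:
  fixes \<phi> :: "complex \<Rightarrow> 'a::ring_1"
  assumes \<phi>: "calg_map \<phi>" and "(2 + sc \<phi> c * yV) * F = 0"
  shows "F = 0"
  using assms(2)
proof (rule fps_mult_eq_0_cancel_left[rotated])
  have half: "\<phi> (1/2) * 2 = 1"
    using central_hom_mult[of \<phi> "1/2" 2] central_hom_numeral[of \<phi> "num.Bit0 num.One"]
      central_hom_1[of \<phi>] \<phi>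
    by (simp add: calg_map_iff_central_hom)
  fix a :: "'a fps"
  assume "fps_nth (2 + sc \<phi> c * yV) 0 * a = 0"
  then have "(2 + fps_const (\<phi> c) * fps_X) * a = 0"
    by (simp add: sc_def yV_def fps_numeral_fps_const)
  then show "a = 0"
  proof (rule fps_mult_eq_0_cancel_left[rotated])
    fix b :: 'a
    assume "fps_nth (2 + fps_const (\<phi> c) * fps_X) 0 * b = 0"
    then have "2 * b = 0" by (simp add: fps_numeral_nth)
    then show "b = 0" using half by (metis mult.assoc mult_1 mult_zero_right)
  qed
qed

definition lincomb :: "('b \<Rightarrow> 'c::ring_1) \<Rightarrow> (nat \<Rightarrow> 'c) \<Rightarrow> nat \<Rightarrow> (nat \<Rightarrow> 'b) \<Rightarrow> 'c"
  where
  "lincomb h P N c = (\<Sum>i<N. h (c i) * P i)"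

context
  fixes h :: "'b::ring_1 \<Rightarrow> 'c::ring_1"
  assumes h: "central_hom h"
begin

lemma lincomb_add: "lincomb h P N c + lincomb h P N d = lincomb h P N (\<lambda>i. c i + d i)"
  by (simp add: lincomb_def central_hom_add[OF h] distrib_right sum.distrib)

lemma lincomb_diff: "lincomb h P N c - lincomb h P N d = lincomb h P N (\<lambda>i. c i - d i)"
  by (simp add: lincomb_def central_hom_diff[OF h] left_diff_distrib sum_subtractf)

lemma lincomb_minus: "- lincomb h P N c = lincomb h P N (\<lambda>i. - c i)"
  by (simp add: lincomb_def central_hom_minus[OF h] sum_negf)

lemma lincomb_scale_left: "h a * lincomb h P N c = lincomb h P N (\<lambda>i. a * c i)"
  by (simp add: lincomb_def central_hom_mult[OF h] sum_distrib_left mult.assoc)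

lemma lincomb_scale_right: "lincomb h P N c * h a = lincomb h P N (\<lambda>i. a * c i)"
  by (simp add: lincomb_def central_hom_mult[OF h] sum_distrib_right mult.assoc
      central_hom_commute[OF h, of a] flip: central_hom_commute[OF h, of "c _"])

lemma lincomb_combine_eq_0:
  assumes "lincomb h P N c = 0" "lincomb h P N d = 0"
  shows "lincomb h P N (\<lambda>i. a * c i + b * d i) = 0"
proof -
  have "lincomb h P N (\<lambda>i. a * c i + b * d i)
      = h a * lincomb h P N c + h b * lincomb h P N d"
    by (simp add: lincomb_scale_left lincomb_add)
  with assms show ?thesis by simp
qed

lemma lincomb_single:
  "j < N \<Longrightarrow> h a * P j = lincomb h P N (\<lambda>i. if i = j then a else 0)"
  unfolding lincomb_def
  by (subst sum.remove[of _ j]) (auto simp: central_hom_0[OF h] intro!: sum.neutral)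

end

lemma lincomb_eq_0_cong:
  "lincomb h P N c = 0 \<Longrightarrow> (\<And>i. i < N \<Longrightarrow> d i = c i) \<Longrightarrow> lincomb h P N d = 0"
  by (simp add: lincomb_def)

lemma less_8_cases:
  "(i::nat) < 8 \<Longrightarrow> i = 0 \<or> i = 1 \<or> i = 2 \<or> i = 3 \<or> i = 4 \<or> i = 5 \<or> i = 6 \<or> i = 7"
  by auto

lemma lincomb_8_eq_0_cong:
  assumes "lincomb h P 8 c = 0"
    and "d 0 = c 0" "d 1 = c 1" "d 2 = c 2" "d 3 = c 3" "d 4 = c 4" "d 5 = c 5" "d 6 = c 6" "d 7 = c 7"
  shows "lincomb h P 8 d = 0"
  using assms(1)
proof (rule lincomb_eq_0_cong)
  show "d i = c i" if "i < 8" for i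
    using less_8_cases[OF that] assms(2-) by auto
qed

section \<open>Entries of the reflection relation\<close>

abbreviation Su :: "nat \<Rightarrow> (nat \<Rightarrow> nat \<Rightarrow> nat \<Rightarrow> 'a::ring_1) \<Rightarrow> nat \<Rightarrow> nat \<Rightarrow> 'a fps fps"
  where
  "Su n s i j \<equiv> inU (ser s (alpha n i) (alpha n j))"

abbreviation Sv :: "nat \<Rightarrow> (nat \<Rightarrow> nat \<Rightarrow> nat \<Rightarrow> 'a::ring_1) \<Rightarrow> nat \<Rightarrow> nat \<Rightarrow> 'a fps fps"
  where
  "Sv n s i j \<equiv> inV (ser s (alpha n i) (alpha n j))"

abbreviation Rh_diag :: "(complex \<Rightarrow> 'a::ring_1) \<Rightarrow> complex \<Rightarrow> 'a fps fps" where
  "Rh_diag \<phi> \<rho> \<equiv> - (xU + yV + sc \<phi> \<rho> * xU * yV)"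

definition indices :: "nat \<Rightarrow> nat set" where "indices n = {1..2*n+2}"

lemma finite_indices [simp]: "finite (indices n)"
  by (simp add: indices_def)

lemma idx_eq: "idx n = indices n \<times> indices n"
  by (simp add: idx_def indices_def)

lemma sum_idx: "(\<Sum>c\<in>idx n. f c) = (\<Sum>p\<in>indices n. \<Sum>q\<in>indices n. f (p, q))"
  unfolding idx_eq by (simp add: sum.cartesian_product)

lemma bar_in_indices: "p \<in> indices n \<Longrightarrow> bar n p \<in> indices n"
  by (auto simp: bar_def indices_def)

lemma bar_eq_iff:
  "p \<in> indices n \<Longrightarrow> k \<in> indices n \<Longrightarrow> k = bar n p \<longleftrightarrow> p = bar n k"
  by (auto simp: bar_def indices_def)

lemma sum_bar_delta:
  assumes "k \<in> indices n"
  shows "(\<Sum>p\<in>indices n. if k = bar n p then f p else 0) = f (bar n k)"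
proof -
  have "(\<Sum>p\<in>indices n. if k = bar n p then f p else 0)
      = (\<Sum>p\<in>indices n. if p = bar n k then f p else 0)"
    by (rule sum.cong) (use assms bar_eq_iff in auto)
  then show ?thesis
    using bar_in_indices[OF assms] by simp
qed

lemma mult_if_zero_right: "x * (if P then a else 0) = (if P then x * a else (0::'a::ring_1))"
  by simp

lemma mult_if_zero_left: "(if P then a else 0) * x = (if P then a * x else (0::'a::ring_1))"
  by simp

lemma Iop_row: "Iop a c = (if c = a then 1 else 0)"
  by (simp add: Iop_def)

lemma Iop_col: "Iop c (j,l) = (if c = (j,l) then 1 else 0)"
  by (auto simp: Iop_def)

lemma Pop_row: "Pop (i,k) c = (if c = (k,i) then 1 else 0)"
  by (cases c) (simp add: Pop_def)

lemma Pop_col: "Pop c (j,l) = (if c = (l,j) then 1 else 0)"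
  by (cases c) (auto simp: Pop_def)

lemma diff_of_deltas:
  "A * (if P then 1 else 0) - C * (if Q then 1 else 0)
     = (if P then A else 0) - (if Q then C else (0::'a::ring_1))"
  by simp

lemma Rc_row:
  "Rc (i,k) c = (if c = (i,k) then yV - xU else 0) - (if c = (k,i) then xU * yV else 0)"
  unfolding Rc_def Iop_row Pop_row by (rule diff_of_deltas)

lemma Rc_col:
  "Rc c (j,l) = (if c = (j,l) then yV - xU else 0) - (if c = (l,j) then xU * yV else 0)"
  unfolding Rc_def Iop_col Pop_col by (rule diff_of_deltas)

lemma Rhc_col:
  "Rhc n \<phi> \<rho> c (j,l) = (if c = (j,l) then Rh_diag \<phi> \<rho> else 0)
     - (if snd c = bar n (fst c) \<and> l = bar n j then xU * yV else 0)"
  unfolding Rhc_def Iop_col Qop_def snd_conv fst_conv by (rule diff_of_deltas)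

lemma mmul_Rc_left:
  assumes "i \<in> indices n" "k \<in> indices n"
  shows "mmul n Rc M (i,k) b = (yV - xU) * M (i,k) b - xU * yV * M (k,i) b"
  unfolding mmul_def Rc_row left_diff_distrib mult_if_zero_left sum_subtractf
  using assms by (simp add: idx_eq)

lemma mmul_Rc_right:
  assumes "j \<in> indices n" "l \<in> indices n"
  shows "mmul n M Rc a (j,l) = M a (j,l) * (yV - xU) - M a (l,j) * (xU * yV)"
  unfolding mmul_def Rc_col right_diff_distrib mult_if_zero_right sum_subtractf
  using assms by (simp add: idx_eq)

lemma mmul_S1_right:
  assumes "l \<in> indices n"
  shows "mmul n M (S1 n s) a (j,l) = (\<Sum>p\<in>indices n. M a (p,l) * Su n s p j)"
  unfolding mmul_def sum_idx
  by (rule sum.cong) (use assms in \<open>simp_all add: S1_def mult_if_zero_right\<close>)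

lemma mmul_S2_right:
  assumes "j \<in> indices n"
  shows "mmul n M (S2 n s) a (j,l) = (\<Sum>q\<in>indices n. M a (j,q) * Sv n s q l)"
  unfolding mmul_def sum_idx
  using assms by (simp add: S2_def mult_if_zero_right sum.swap[of _ "indices n"])

lemma mmul_Rhc_right:
  assumes "j \<in> indices n" "l \<in> indices n"
  shows "mmul n M (Rhc n \<phi> \<rho>) a (j,l) = M a (j,l) * Rh_diag \<phi> \<rho>
     - (if l = bar n j then (\<Sum>p\<in>indices n. M a (p, bar n p)) else 0) * (xU * yV)"
proof -
  have "(\<Sum>c\<in>idx n. if snd c = bar n (fst c) \<and> l = bar n j then M a c * (xU * yV) else 0)
      = (if l = bar n j then (\<Sum>p\<in>indices n. M a (p, bar n p)) else 0) * (xU * yV)"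
    unfolding sum_idx using bar_in_indices by (simp add: sum_distrib_right)
  then show ?thesis
    unfolding mmul_def Rhc_col right_diff_distrib mult_if_zero_right sum_subtractf
    using assms by (simp add: idx_eq)
qed

lemma reflection_lhs_entry:
  assumes "i \<in> indices n" "k \<in> indices n" "j \<in> indices n" "l \<in> indices n"
  shows "mmul n (mmul n (mmul n Rc (S1 n s)) (Rhc n \<phi> \<rho>)) (S2 n s) (i,k) (j,l)
   = (yV - xU) * Su n s i j * Rh_diag \<phi> \<rho> * Sv n s k l
   - xU * yV * Su n s k j * Rh_diag \<phi> \<rho> * Sv n s i l
   - ((yV - xU) * Su n s i (bar n k) - xU * yV * Su n s k (bar n i))
       * (xU * yV) * Sv n s (bar n j) l"
    (is "_ = ?rhs")
proof -
  let ?N = "mmul n Rc (S1 n s)"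
  have N: "?N (i,k) (p,q) = (if k = q then (yV - xU) * Su n s i p else 0)
        - (if i = q then xU * yV * Su n s k p else 0)" for p q
    using assms by (simp add: mmul_Rc_left S1_def)
  have Nsum: "(\<Sum>p\<in>indices n. ?N (i,k) (p, bar n p))
      = (yV - xU) * Su n s i (bar n k) - xU * yV * Su n s k (bar n i)"
    using assms by (simp only: N sum_subtractf sum_bar_delta)
  have "mmul n (mmul n ?N (Rhc n \<phi> \<rho>)) (S2 n s) (i,k) (j,l)
     = (\<Sum>q\<in>indices n. (?N (i,k) (j,q) * Rh_diag \<phi> \<rho>
         - (if q = bar n j then (\<Sum>p\<in>indices n. ?N (i,k) (p, bar n p)) else 0) * (xU * yV))
         * Sv n s q l)"
    using assms by (simp add: mmul_S2_right mmul_Rhc_right)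
  also have "\<dots> = ?rhs"
    unfolding Nsum unfolding N
    using assms bar_in_indices[of j n]
    by (simp add: left_diff_distrib mult_if_zero_left sum_subtractf sum_bar_delta)
  finally show ?thesis .
qed

lemma S2_Rhc_S1_entry:
  assumes "i \<in> indices n" "k \<in> indices n" "j \<in> indices n" "l \<in> indices n"
  shows "mmul n (mmul n (S2 n s) (Rhc n \<phi> \<rho>)) (S1 n s) (i,k) (j,l)
    = Sv n s k l * Rh_diag \<phi> \<rho> * Su n s i j
    - Sv n s k (bar n i) * (xU * yV) * Su n s (bar n l) j"
    (is "_ = ?rhs")
proof -
  have Ssum: "(\<Sum>r\<in>indices n. S2 n s (i,k) (r, bar n r)) = Sv n s k (bar n i)"
    using assms by (simp add: S2_def)
  have "mmul n (mmul n (S2 n s) (Rhc n \<phi> \<rho>)) (S1 n s) (i,k) (j,l)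
     = (\<Sum>p\<in>indices n. (S2 n s (i,k) (p,l) * Rh_diag \<phi> \<rho>
         - (if l = bar n p then (\<Sum>r\<in>indices n. S2 n s (i,k) (r, bar n r)) else 0) * (xU * yV))
         * Su n s p j)"
    using assms by (simp add: mmul_S1_right mmul_Rhc_right)
  also have "\<dots> = ?rhs"
    unfolding Ssum
    using assms bar_in_indices[of l n]
    by (simp add: S2_def left_diff_distrib mult_if_zero_left sum_subtractf sum_bar_delta)
  finally show ?thesis .
qed

lemma reflection_rhs_entry:
  assumes "i \<in> indices n" "k \<in> indices n" "j \<in> indices n" "l \<in> indices n"
  shows "mmul n (mmul n (mmul n (S2 n s) (Rhc n \<phi> \<rho>)) (S1 n s)) Rc (i,k) (j,l)
    = (Sv n s k l * Rh_diag \<phi> \<rho> * Su n s i j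
    - Sv n s k (bar n i) * (xU * yV) * Su n s (bar n l) j) * (yV - xU)
    - (Sv n s k j * Rh_diag \<phi> \<rho> * Su n s i l
    - Sv n s k (bar n i) * (xU * yV) * Su n s (bar n j) l) * (xU * yV)"
  using assms by (simp add: mmul_Rc_right S2_Rhc_S1_entry)

section \<open>Relations among the eight monomials\<close>

locale twisted_yangian_column =
  fixes n k :: nat and \<rho> :: complex and \<phi> :: "complex \<Rightarrow> 'a::ring_1"
    and s :: "nat \<Rightarrow> nat \<Rightarrow> nat \<Rightarrow> 'a"
  assumes gens: "twisted_yangian_gens n \<phi> \<rho> s" and k: "1 \<le> k" "k \<le> n"
begin

lemma calg: "calg_map \<phi>"
  and refl: "refl_rel n \<phi> \<rho> s"
  and symm: "symm_rel n \<phi> \<rho> s"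
  using gens by (simp_all add: twisted_yangian_gens_def)

lemma scalar_hom: "central_hom (scalar \<phi>)"
  using calg by (rule central_hom_scalar)

lemma in_indices:
  "k \<in> indices n" "n+1 \<in> indices n" "n+2 \<in> indices n" "bar n k \<in> indices n"
  using k by (auto simp: indices_def bar_def)

lemma alpha_bar_simps:
  "alpha n k = k" "alpha n (n+1) = n+1" "alpha n (n+2) = n+1" "alpha n (bar n k) = 2*n+2-k"
  "bar n (n+1) = n+2" "bar n (n+2) = n+1" "bar n (bar n k) = k"
  using k by (auto simp: alpha_def bar_def)

definition skh where "skh = ser s k (n+1)"
definition shh where "shh = ser s (n+1) (n+1)"
definition shk where "shk = ser s (n+1) (2*n+2-k)"

definition mono :: "nat \<Rightarrow> 'a fps fps" where
  "mono = (!) [inU skh * inV shh, inV shh * inU skh, inV skh * inU shh, inV shk * inU shh,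
     inV (tld \<phi> \<rho> skh) * inU shh, inU shh * inV skh, inU shk * inV shh,
     inV (tld \<phi> \<rho> shk) * inU shh]"

lemma mono_simps:
  "inU skh * inV shh = mono 0" "inV shh * inU skh = mono 1" "inV skh * inU shh = mono 2"
  "inV shk * inU shh = mono 3" "inV (tld \<phi> \<rho> skh) * inU shh = mono 4"
  "inU shh * inV skh = mono 5" "inU shk * inV shh = mono 6"
  "inV (tld \<phi> \<rho> shk) * inU shh = mono 7"
  by (simp_all add: mono_def)

abbreviation comb :: "(nat \<Rightarrow> complex fps fps) \<Rightarrow> 'a fps fps" where
  "comb \<equiv> lincomb (scalar \<phi>) mono 8"

lemma scalar_commute_series:
  "inU g * scalar \<phi> a = scalar \<phi> a * inU g"
  "inV g * scalar \<phi> a = scalar \<phi> a * inV g"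
  "inU g * (scalar \<phi> a * r) = scalar \<phi> a * (inU g * r)"
  "inV g * (scalar \<phi> a * r) = scalar \<phi> a * (inV g * r)"
  using scalar_commute[OF calg] by (simp_all flip: mult.assoc)

text \<open>Rewrites a polynomial expression in the eight monomials, with scalar coefficients placed
  anywhere, into the form \<open>comb c\<close>.\<close>

lemmas normalize = scalar_atoms[OF calg] scalar_fold[OF calg] scalar_commute_series mult.assoc
  left_diff_distrib right_diff_distrib distrib_left distrib_right mono_simps
  lincomb_single[OF scalar_hom, where N=8 and P=mono]
  lincomb_add[OF scalar_hom] lincomb_diff[OF scalar_hom] lincomb_minus[OF scalar_hom]
  lincomb_scale_left[OF scalar_hom] lincomb_scale_right[OF scalar_hom]

text \<open>After clearing denominators, \<open>Rc = rI \<cdot> I - xy \<cdot> P\<close> and \<open>Rhc = rhI \<cdot> I - xy \<cdot> Q\<close>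
  (up to \<open>scalar \<phi>\<close>).\<close>

abbreviation "rI \<equiv> yC - xC"
abbreviation "rhI \<equiv> - (xC + yC + cC \<rho> * xC * yC)"
abbreviation "xy \<equiv> xC * yC"

lemma reflection_entry:
  assumes "i \<in> indices n" "k' \<in> indices n" "j \<in> indices n" "l \<in> indices n"
  shows "mmul n (mmul n (mmul n Rc (S1 n s)) (Rhc n \<phi> \<rho>)) (S2 n s) (i,k') (j,l)
       - mmul n (mmul n (mmul n (S2 n s) (Rhc n \<phi> \<rho>)) (S1 n s)) Rc (i,k') (j,l) = 0"
  using refl assms unfolding refl_rel_def idx_eq by simp

lemma reflection_kh:
  "comb ((!) [rI*rhI - rI*xy, -(rI*rhI - rhI*xy), 0, -(xy*xy - rI*xy), 0, -(rhI*xy), xy*xy, 0])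
     = 0"
  using reflection_entry[OF in_indices(1,2,2,2)]
  unfolding reflection_lhs_entry[OF in_indices(1,2,2,2)] reflection_rhs_entry[OF in_indices(1,2,2,2)]
    alpha_bar_simps skh_def[symmetric] shh_def[symmetric] shk_def[symmetric]
  by (simp add: normalize) (erule lincomb_8_eq_0_cong; simp; algebra)

lemma reflection_hk:
  "comb ((!) [xy*xy - rhI*xy, 0, -((rI-xy)*(rhI-xy)), 0, 0, rI*rhI, -(rI*xy), 0]) = 0"
  using reflection_entry[OF in_indices(2,1,2,2)]
  unfolding reflection_lhs_entry[OF in_indices(2,1,2,2)] reflection_rhs_entry[OF in_indices(2,1,2,2)]
    alpha_bar_simps skh_def[symmetric] shh_def[symmetric] shk_def[symmetric]
  by (simp add: normalize) (erule lincomb_8_eq_0_cong; simp; algebra)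

lemma symmetry_entry:
  assumes "a \<in> indices n" "b \<in> indices n"
  shows "inV ((2 + fps_const (\<phi> \<rho>) * fps_X)
           * tld \<phi> \<rho> (ser s (alpha n (bar n b)) (alpha n (bar n a)))) * inU shh
     - inV ((2 + fps_const (\<phi> \<rho>) * fps_X) * ser s (alpha n a) (alpha n b)
       + fps_X * (ser s (alpha n a) (alpha n b) - tld \<phi> \<rho> (ser s (alpha n a) (alpha n b))))
       * inU shh = 0"
  using symm assms unfolding symm_rel_def indices_def by simp

lemma symmetry_kh:
  "comb ((!) [0, 0, -(2 + cC \<rho> * yC) - yC, 0, yC, 0, 0, 2 + cC \<rho> * yC]) = 0"
  using symmetry_entry[OF in_indices(1,3)]
  unfolding alpha_bar_simps skh_def[symmetric] shk_def[symmetric]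
  by (simp add: inV_simps normalize) (erule lincomb_8_eq_0_cong; simp; algebra)

lemma symmetry_hk:
  "comb ((!) [0, 0, 0, -(2 + cC \<rho> * yC) - yC, 2 + cC \<rho> * yC, 0, 0, yC]) = 0"
  using symmetry_entry[OF in_indices(2,4)]
  unfolding alpha_bar_simps skh_def[symmetric] shk_def[symmetric]
  by (simp add: inV_simps normalize) (erule lincomb_8_eq_0_cong; simp; algebra)

lemma shk_via_symmetry:
  "comb ((!) [0, 0, -yC, 2 + cC \<rho> * yC, -(2 + (cC \<rho> - 1) * yC), 0, 0, 0]) = 0"
  (is "comb ?c = 0")
proof (rule two_plus_cancel[OF calg])
  show "(2 + sc \<phi> (\<rho> + 1) * yV) * comb ?c = 0"
    using lincomb_combine_eq_0[OF scalar_hom symmetry_kh symmetry_hk,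
        of yC "- (2 + cC \<rho> * yC)"]
    by (simp add: normalize) (erule lincomb_8_eq_0_cong; simp add: cC_add cC_1; algebra)
qed

lemma reflection_combined:
  "comb ((!) [(rhI - xy) * (rI + xy), -(rI * rhI), -(xy * (rhI - xy)), rI * xy, 0, 0, 0, 0]) = 0"
  (is "comb ?c = 0")
proof (rule uv_factor_cancel)
  show "(yV - xU - xU * yV) * comb ?c = 0"
    using lincomb_combine_eq_0[OF scalar_hom reflection_kh reflection_hk, of rI xy]
    by (simp add: normalize) (erule lincomb_8_eq_0_cong; simp; algebra)
qed

lemma main_identity:
  "(yV - xU) * (xU + yV + sc \<phi> \<rho> * xU * yV) * (2 + sc \<phi> \<rho> * yV) * inV shh * inU skh
   = (yV - xU + xU * yV) * (xU + yV + sc \<phi> (\<rho> + 1) * xU * yV) * (2 + sc \<phi> \<rho> * yV)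
       * inU skh * inV shh
     - xU * yV * ((2 + sc \<phi> (\<rho> + 1) * yV) * (xU + yV + sc \<phi> \<rho> * xU * yV) * inV skh
                  + (2 + sc \<phi> (\<rho> - 1) * yV) * (yV - xU) * inV (tld \<phi> \<rho> skh)) * inU shh"
  (is "?L = ?R")
proof -
  have "?L - ?R = 0"
    using lincomb_combine_eq_0[OF scalar_hom reflection_combined shk_via_symmetry,
        of "2 + cC \<rho> * yC" "- (xy * rI)"]
    by (simp add: normalize) (erule lincomb_8_eq_0_cong; simp add: cC_add cC_diff cC_1; algebra)
  then show ?thesis by simp
qed

end

theorem mainTheorem2:
  fixes n k :: nat and \<rho> :: complex and \<phi> :: "complex \<Rightarrow> 'a::ring_1"
    and s :: "nat \<Rightarrow> nat \<Rightarrow> nat \<Rightarrow> 'a"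
  assumes "n \<ge> 1"
    and "twisted_yangian_gens n \<phi> \<rho> s"
    and "1 \<le> k" and "k \<le> n"
  shows "(yV - xU) * (xU + yV + sc \<phi> \<rho> * xU * yV) * (2 + sc \<phi> \<rho> * yV)
           * inV (ser s (n+1) (n+1)) * inU (ser s k (n+1))
       = (yV - xU + xU * yV) * (xU + yV + sc \<phi> (\<rho> + 1) * xU * yV) * (2 + sc \<phi> \<rho> * yV)
           * inU (ser s k (n+1)) * inV (ser s (n+1) (n+1))
         - xU * yV * ( (2 + sc \<phi> (\<rho> + 1) * yV) * (xU + yV + sc \<phi> \<rho> * xU * yV)
                         * inV (ser s k (n+1))
                     + (2 + sc \<phi> (\<rho> - 1) * yV) * (yV - xU)
                         * inV (tld \<phi> \<rho> (ser s k (n+1))) )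
           * inU (ser s (n+1) (n+1))"
proof -
  interpret twisted_yangian_column n k \<rho> \<phi> s
    using assms(2-4) by unfold_locales
  show ?thesis
    using main_identity unfolding skh_def shh_def .
qed

end
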